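(* Let $f(t)=\frac{1-e^{-t}}{t}$, let $a>0$, $b>0$, let $0<\lambda_1\le\lambda_2\le\dots\le\lambda_M$ and $0\le\bar x\le\sum_{m=1}^M\lambda_m$. Consider $$\max_{\bm c}\ \sum_{m=1}^M c_m f(a+bc_m)\quad\text{s.t.}\quad \sum_{m=1}^M c_m=\bar x,\quad 0\le c_m\le\lambda_m\ \forall m.$$ Then $g(c)=f(a+bc)+bc f'(a+bc)$ satisfies $g(c)\ge e^{-(a+bc)}>0$ and is strictly decreasing in $c\ge0$, and the problem has the unique optimal solution $c_m^*=\min\{\lambda_m,C_0\}$, $m=1,\dots,M$, where $C_0=\bar x/M$ if $\bar x/M\le\lambda_1$, and otherwise $C_0=\frac{\bar x-\sum_{i=1}^n\lambda_i}{M-n}$ for the index $n\in\{1,\dots,M-1\}$ with $\lambda_n<\frac{\bar x-\sum_{i=1}^n\lambda_i}{M-n}\le\lambda_{n+1}$ (equivalently, $C_0$ is such that $\sum_m\min\{\lambda_m,C_0\}=\bar x$).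
   Context: This is the inner problem $\mathcal{P}2.1$ of the unbiased case $B_1=\dots=B_M$, in which, for a fixed total caching density $\bar x=\sum_m c_m$, the active ratio $\rho$ is common to all groups and $\varphi_m=\pi R^2(\bar x+\lambda_B\theta_B+c_m\rho\theta_I)$; so $a=\pi R^2(\bar x+\lambda_B\theta_B)$, $b=\pi R^2\rho\theta_I$. $\lambda_m$ is the density of interested users in group $m$ and $c_m$ the caching density. *)

theory Defs
  imports "HOL-Analysis.Analysis"
begin

definition fcache :: "real \<Rightarrow> real" where
  "fcache t = (1 - exp (- t)) / t"

definition gcache :: "real \<Rightarrow> real \<Rightarrow> real \<Rightarrow> real" where
  "gcache a b c = fcache (a + b * c) + b * c * deriv fcache (a + b * c)"

definition objective :: "real \<Rightarrow> real \<Rightarrow> nat \<Rightarrow> (nat \<Rightarrow> real) \<Rightarrow> real" where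
  "objective a b M c = (\<Sum>m=1..M. c m * fcache (a + b * c m))"

definition feasible :: "nat \<Rightarrow> (nat \<Rightarrow> real) \<Rightarrow> real \<Rightarrow> (nat \<Rightarrow> real) \<Rightarrow> bool" where
  "feasible M lam xbar c \<longleftrightarrow> (\<Sum>m=1..M. c m) = xbar \<and> (\<forall>m\<in>{1..M}. 0 \<le> c m \<and> c m \<le> lam m)"

definition unique_opt :: "real \<Rightarrow> real \<Rightarrow> nat \<Rightarrow> (nat \<Rightarrow> real) \<Rightarrow> real \<Rightarrow> (nat \<Rightarrow> real) \<Rightarrow> bool" where
  "unique_opt a b M lam xbar c \<longleftrightarrow> feasible M lam xbar c \<and>
     (\<forall>d. feasible M lam xbar d \<longrightarrow> objective a b M d \<le> objective a b M c) \<and>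
     (\<forall>d. feasible M lam xbar d \<and> objective a b M d = objective a b M c \<longrightarrow> (\<forall>m\<in>{1..M}. d m = c m))"

definition C0_spec :: "nat \<Rightarrow> (nat \<Rightarrow> real) \<Rightarrow> real \<Rightarrow> real \<Rightarrow> bool" where
  "C0_spec M lam xbar C0 \<longleftrightarrow>
     (xbar / real M \<le> lam 1 \<and> C0 = xbar / real M) \<or>
     (\<not> (xbar / real M \<le> lam 1) \<and>
      (\<exists>n\<in>{1..M-1}.
         lam n < (xbar - (\<Sum>i=1..n. lam i)) / real (M - n) \<and>
         (xbar - (\<Sum>i=1..n. lam i)) / real (M - n) \<le> lam (n + 1) \<and>
         C0 = (xbar - (\<Sum>i=1..n. lam i)) / real (M - n)))"

end

theory Submission imports Defs begin

text \<open>
  Writing \<open>t = a + b c\<close>, one finds \<open>g(c) = e\<^sup>-\<^sup>t + a k(t)\<close> with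
  \<open>k(t) = (1 - (1 + t) e\<^sup>-\<^sup>t) / t\<^sup>2\<close>; the Taylor bounds \<open>e\<^sup>t \<ge> 1 + t\<close> and
  \<open>e\<^sup>t \<ge> 1 + t + t\<^sup>2/2\<close> show that \<open>k\<close> is nonnegative and nonincreasing, so \<open>g\<close> is
  bounded below by \<open>e\<^sup>-\<^sup>t\<close> and strictly decreasing. As \<open>g\<close> is the derivative of
  \<open>h(c) = c f(a + b c)\<close>, each summand of the objective is strictly concave and lies below
  its tangents. At the water-filling point \<open>c\<^sub>m = min \<lambda>\<^sub>m C\<^sub>0\<close> the slopes \<open>g(c\<^sub>m)\<close>
  equal \<open>g(C\<^sub>0)\<close> on the unsaturated coordinates and exceed it on the saturated ones,
  where any feasible \<open>d\<^sub>m \<le> c\<^sub>m\<close>; summing the tangent inequalities over \<open>m\<close> and using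
  \<open>\<Sum> d\<^sub>m = \<Sum> c\<^sub>m\<close> gives optimality, strictly unless \<open>d = c\<close>.
\<close>

definition dfcache :: "real \<Rightarrow> real" where
  "dfcache t = (t * exp (- t) - (1 - exp (- t))) / t\<^sup>2"

lemma fcache_has_real_derivative:
  assumes "t \<noteq> 0"
  shows "(fcache has_real_derivative dfcache t) (at t)"
  unfolding fcache_def [abs_def] dfcache_def using assms
  by (auto intro!: derivative_eq_intros simp: field_simps power2_eq_square)

definition kcache :: "real \<Rightarrow> real" where
  "kcache t = (1 - (1 + t) * exp (- t)) / t\<^sup>2"

lemma gcache_eq_exp_plus_kcache:
  assumes "a + b * c > 0"
  shows "gcache a b c = exp (- (a + b * c)) + a * kcache (a + b * c)"
proof -
  define t where "t = a + b * c"
  have "t > 0" using assms by (simp add: t_def)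
  then have "deriv fcache t = dfcache t"
    by (simp add: DERIV_imp_deriv fcache_has_real_derivative)
  then have "gcache a b c = fcache t + (t - a) * dfcache t"
    by (simp add: gcache_def t_def)
  also have "\<dots> = exp (- t) + a * kcache t"
    using \<open>t > 0\<close> by (simp add: fcache_def dfcache_def kcache_def field_simps power2_eq_square)
  finally show ?thesis by (simp add: t_def)
qed

lemma poly_times_exp_minus_le_one:
  fixes p t :: real
  assumes "p \<le> exp t"
  shows "p * exp (- t) \<le> 1"
  using mult_right_mono [OF assms, of "exp (- t)"] by (simp add: exp_minus_inverse)

lemma kcache_nonneg: "t > 0 \<Longrightarrow> 0 \<le> kcache t"
  using poly_times_exp_minus_le_one [OF exp_ge_add_one_self, of t] by (simp add: kcache_def)

lemma kcache_has_real_derivative: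
  assumes "t \<noteq> 0"
  shows "(kcache has_real_derivative 2 * ((1 + t + t\<^sup>2 / 2) * exp (- t) - 1) / t ^ 3) (at t)"
  unfolding kcache_def [abs_def] using assms
  by (auto intro!: derivative_eq_intros simp: field_simps power2_eq_square power3_eq_cube)

lemma kcache_antimono:
  assumes "0 < s" "s \<le> t"
  shows "kcache t \<le> kcache s"
proof (rule DERIV_nonpos_imp_nonincreasing [OF \<open>s \<le> t\<close>])
  fix x assume "s \<le> x" "x \<le> t"
  with \<open>0 < s\<close> have "0 < x" by simp
  have "(1 + x + x\<^sup>2 / 2) * exp (- x) \<le> 1"
    using \<open>0 < x\<close> by (intro poly_times_exp_minus_le_one exp_lower_Taylor_quadratic) simp
  then have "2 * ((1 + x + x\<^sup>2 / 2) * exp (- x) - 1) / x ^ 3 \<le> 0"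
    using \<open>0 < x\<close> by (intro divide_nonpos_pos) simp_all
  moreover have "(kcache has_real_derivative 2 * ((1 + x + x\<^sup>2 / 2) * exp (- x) - 1) / x ^ 3) (at x)"
    using \<open>0 < x\<close> by (intro kcache_has_real_derivative) simp
  ultimately show "\<exists>y. (kcache has_real_derivative y) (at x) \<and> y \<le> 0"
    by blast
qed

lemma gcache_ge_exp:
  assumes "a > 0" "b > 0" "c \<ge> 0"
  shows "exp (- (a + b * c)) \<le> gcache a b c"
proof -
  have "a + b * c > 0" using assms by (simp add: add_pos_nonneg)
  then show ?thesis
    using gcache_eq_exp_plus_kcache kcache_nonneg \<open>a > 0\<close> by simp
qed

lemma gcache_strict_decreasing:
  assumes "a > 0" "b > 0" "0 \<le> c1" "c1 < c2"
  shows "gcache a b c2 < gcache a b c1"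
proof -
  have pos: "a + b * c1 > 0" using assms by (simp add: add_pos_nonneg)
  have lt: "a + b * c1 < a + b * c2" using assms by simp
  then have pos2: "a + b * c2 > 0" using pos by simp
  have "exp (- (a + b * c2)) < exp (- (a + b * c1))" using lt by simp
  moreover have "a * kcache (a + b * c2) \<le> a * kcache (a + b * c1)"
    using kcache_antimono [OF pos less_imp_le [OF lt]] \<open>a > 0\<close> by simp
  ultimately show ?thesis
    unfolding gcache_eq_exp_plus_kcache [OF pos] gcache_eq_exp_plus_kcache [OF pos2] by linarith
qed

definition hcache :: "real \<Rightarrow> real \<Rightarrow> real \<Rightarrow> real" where
  "hcache a b x = x * fcache (a + b * x)"

lemma hcache_has_real_derivative:
  assumes "a > 0" "b > 0" "c \<ge> 0"
  shows "(hcache a b has_real_derivative gcache a b c) (at c)"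
proof -
  have "a + b * c > 0" using assms by (simp add: add_pos_nonneg)
  then have df: "(fcache has_real_derivative dfcache (a + b * c)) (at (a + b * c))"
    by (simp add: fcache_has_real_derivative)
  have "((\<lambda>x. fcache (a + b * x)) has_real_derivative dfcache (a + b * c) * b) (at c)"
    by (rule DERIV_chain2 [where g = "\<lambda>x. a + b * x", OF df]) (auto intro!: derivative_eq_intros)
  then have "(hcache a b has_real_derivative 1 * fcache (a + b * c) + dfcache (a + b * c) * b * c) (at c)"
    unfolding hcache_def [abs_def] by (rule DERIV_mult [OF DERIV_ident])
  moreover have "deriv fcache (a + b * c) = dfcache (a + b * c)"
    using df by (rule DERIV_imp_deriv)
  ultimately show ?thesis by (simp add: gcache_def algebra_simps)
qed

lemma strict_below_tangent:
  fixes h h' :: "real \<Rightarrow> real"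
  assumes "is_interval S"
    and deriv: "\<And>z. z \<in> S \<Longrightarrow> (h has_real_derivative h' z) (at z)"
    and decr: "\<And>u v. u \<in> S \<Longrightarrow> v \<in> S \<Longrightarrow> u < v \<Longrightarrow> h' v < h' u"
    and "x \<in> S" "y \<in> S" "x \<noteq> y"
  shows "h y < h x + h' x * (y - x)"
proof (cases "x < y")
  case True
  have seg: "z \<in> S" if "x \<le> z" "z \<le> y" for z
    using \<open>is_interval S\<close> \<open>x \<in> S\<close> \<open>y \<in> S\<close> that unfolding is_interval_1 by blast
  obtain z where z: "x < z" "z < y" and mvt: "h y - h x = (y - x) * h' z"
    using MVT2 [OF True, of h h'] deriv seg by blast
  have "h' z < h' x" using decr seg z \<open>x \<in> S\<close> by simp
  then have "(y - x) * h' z < (y - x) * h' x" using True by simp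
  with mvt show ?thesis by (simp add: algebra_simps)
next
  case False
  with \<open>x \<noteq> y\<close> have "y < x" by simp
  have seg: "z \<in> S" if "y \<le> z" "z \<le> x" for z
    using \<open>is_interval S\<close> \<open>x \<in> S\<close> \<open>y \<in> S\<close> that unfolding is_interval_1 by blast
  obtain z where z: "y < z" "z < x" and mvt: "h x - h y = (x - y) * h' z"
    using MVT2 [OF \<open>y < x\<close>, of h h'] deriv seg by blast
  have "h' x < h' z" using decr seg z \<open>x \<in> S\<close> by simp
  then have "(x - y) * h' x < (x - y) * h' z" using \<open>y < x\<close> by simp
  with mvt show ?thesis by (simp add: algebra_simps)
qed

lemma water_filling_unique_max:
  fixes h g :: "real \<Rightarrow> real" and lam d :: "'i \<Rightarrow> real"
  assumes "finite I"
    and deriv: "\<And>x. 0 \<le> x \<Longrightarrow> (h has_real_derivative g x) (at x)"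
    and decr: "\<And>x y. 0 \<le> x \<Longrightarrow> x < y \<Longrightarrow> g y < g x"
    and "0 \<le> C0"
    and level: "(\<Sum>i\<in>I. min (lam i) C0) = (\<Sum>i\<in>I. d i)"
    and d: "\<And>i. i \<in> I \<Longrightarrow> 0 \<le> d i \<and> d i \<le> lam i"
  defines "c \<equiv> \<lambda>i. min (lam i) C0"
  shows "(\<Sum>i\<in>I. h (d i)) \<le> (\<Sum>i\<in>I. h (c i))"
    and "(\<Sum>i\<in>I. h (d i)) = (\<Sum>i\<in>I. h (c i)) \<Longrightarrow> \<forall>i\<in>I. d i = c i"
proof -
  define T where "T i = h (c i) + g (c i) * (d i - c i)" for i
  have c_nonneg: "0 \<le> c i" if "i \<in> I" for i
    using d [OF that] \<open>0 \<le> C0\<close> by (simp add: c_def)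
  have tangent_lt: "h (d i) < T i" if "i \<in> I" "d i \<noteq> c i" for i
    unfolding T_def
  proof (rule strict_below_tangent [of "{0..}"])
    show "c i \<in> {0..}" "d i \<in> {0..}" "c i \<noteq> d i"
      using c_nonneg d that by auto
  qed (auto intro: deriv decr simp: is_interval_ci)
  then have tangent_le: "h (d i) \<le> T i" if "i \<in> I" for i
    using that by (cases "d i = c i") (auto simp: T_def intro: less_imp_le)
  \<comment> \<open>where \<open>c i = lam i < C0\<close> the slope is larger, but then \<open>d i - c i \<le> 0\<close>\<close>
  have T_le: "T i \<le> h (c i) + g C0 * (d i - c i)" if "i \<in> I" for i
  proof (cases "C0 \<le> lam i")
    case False
    then have "g C0 < g (c i)" "d i - c i \<le> 0"
      using decr d [OF that] by (auto simp: c_def)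
    then show ?thesis by (simp add: T_def mult_right_mono_neg)
  qed (simp add: T_def c_def)
  have "(\<Sum>i\<in>I. T i) \<le> (\<Sum>i\<in>I. h (c i) + g C0 * (d i - c i))"
    by (rule sum_mono) (rule T_le)
  also have "\<dots> = (\<Sum>i\<in>I. h (c i))"
    using level by (simp add: sum.distrib sum_subtractf c_def flip: sum_distrib_left)
  finally have sum_T: "(\<Sum>i\<in>I. T i) \<le> (\<Sum>i\<in>I. h (c i))" .
  show "(\<Sum>i\<in>I. h (d i)) \<le> (\<Sum>i\<in>I. h (c i))"
    using sum_mono [of I "\<lambda>i. h (d i)" T] tangent_le sum_T by simp
  show "\<forall>i\<in>I. d i = c i" if eq: "(\<Sum>i\<in>I. h (d i)) = (\<Sum>i\<in>I. h (c i))"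
  proof (rule ccontr)
    assume "\<not> (\<forall>i\<in>I. d i = c i)"
    then obtain k where "k \<in> I" "d k \<noteq> c k" by auto
    then have "(\<Sum>i\<in>I. h (d i)) < (\<Sum>i\<in>I. T i)"
      by (intro sum_strict_mono_ex1 [OF \<open>finite I\<close>] ballI tangent_le bexI [of _ k] tangent_lt)
    with sum_T eq show False by simp
  qed
qed

lemma le_of_adjacent_le:
  fixes lam :: "nat \<Rightarrow> real"
  assumes "\<forall>m\<in>{1..<M}. lam m \<le> lam (m + 1)" "1 \<le> i" "i \<le> j" "j \<le> M"
  shows "lam i \<le> lam j"
  using assms(3,4)
proof (induction j rule: dec_induct)
  case (step k)
  then have "lam k \<le> lam (k + 1)" using assms(1,2) by auto
  with step show ?case by simp
qed simp

lemma C0_spec_exists: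
  fixes xbar :: real and lam :: "nat \<Rightarrow> real"
  assumes "M \<ge> 1" "xbar \<le> (\<Sum>m=1..M. lam m)"
  shows "\<exists>C0. C0_spec M lam xbar C0"
proof (cases "xbar / real M \<le> lam 1")
  case True
  then show ?thesis unfolding C0_spec_def by blast
next
  case False
  define S where "S n = (\<Sum>i=1..n. lam i)" for n
  \<comment> \<open>the total \<open>\<Sum>\<^sub>m min \<lambda>\<^sub>m \<lambda>\<^sub>n\<close> allocated by the level \<open>\<lambda>\<^sub>n\<close>\<close>
  define phi where "phi n = S n + real (M - n) * lam n" for n
  have "M \<noteq> 1" using False assms by auto
  with assms have "M \<ge> 2" by simp
  define N where "N = {n \<in> {1..M-1}. phi n < xbar}"
  have "phi 1 = real M * lam 1"
    using assms by (simp add: phi_def S_def of_nat_diff algebra_simps)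
  also have "\<dots> < xbar"
    using False assms by (simp add: not_le pos_less_divide_eq mult.commute)
  finally have "1 \<in> N" using \<open>M \<ge> 2\<close> by (simp add: N_def)
  define n where "n = Max N"
  have "finite N" by (simp add: N_def)
  then have "n \<in> N" using \<open>1 \<in> N\<close> unfolding n_def by (intro Max_in) auto
  then have n: "1 \<le> n" "n \<le> M - 1" "phi n < xbar" by (auto simp: N_def)
  have "xbar \<le> phi (n + 1)"
  proof (cases "n + 1 \<le> M - 1")
    case True
    have "n + 1 \<notin> N" using Max_ge [OF \<open>finite N\<close>, of "n + 1"] by (auto simp: n_def)
    with True show ?thesis by (auto simp: N_def)
  next
    case False
    with n have "n + 1 = M" by simp
    with assms show ?thesis by (simp add: phi_def S_def)
  qed
  have pos: "real (M - n) > 0" using n \<open>M \<ge> 2\<close> by simp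
  have "real (M - (n + 1)) = real (M - n) - 1" using n \<open>M \<ge> 2\<close> by (simp add: of_nat_diff)
  then have "lam n < (xbar - S n) / real (M - n)"
    and "(xbar - S n) / real (M - n) \<le> lam (n + 1)"
    using n(3) \<open>xbar \<le> phi (n + 1)\<close> pos
    by (simp_all add: phi_def S_def pos_less_divide_eq pos_divide_le_eq algebra_simps)
  with False n show ?thesis unfolding C0_spec_def S_def by force
qed

lemma C0_spec_water_level:
  fixes xbar :: real and lam :: "nat \<Rightarrow> real"
  assumes "M \<ge> 1" "0 < lam 1" and mono: "\<forall>m\<in>{1..<M}. lam m \<le> lam (m + 1)" and "0 \<le> xbar"
    and "C0_spec M lam xbar C0"
  shows "0 \<le> C0" "(\<Sum>m=1..M. min (lam m) C0) = xbar"
  using \<open>C0_spec M lam xbar C0\<close> unfolding atomize_conj C0_spec_def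
proof (elim disjE conjE bexE)
  assume le: "xbar / real M \<le> lam 1" and C: "C0 = xbar / real M"
  have "min (lam m) C0 = C0" if "m \<in> {1..M}" for m
    using le_of_adjacent_le [OF mono, of 1 m] le C that by force
  then show "0 \<le> C0 \<and> (\<Sum>m=1..M. min (lam m) C0) = xbar"
    using C assms by simp
next
  fix n assume n: "n \<in> {1..M-1}"
    and below: "lam n < (xbar - (\<Sum>i=1..n. lam i)) / real (M - n)"
    and above: "(xbar - (\<Sum>i=1..n. lam i)) / real (M - n) \<le> lam (n + 1)"
    and C: "C0 = (xbar - (\<Sum>i=1..n. lam i)) / real (M - n)"
  have "n < M" using n by auto
  have "lam 1 \<le> lam n" using le_of_adjacent_le [OF mono] n by auto
  then have "0 \<le> C0" using below C assms by simp
  have split: "(\<Sum>m=1..M. min (lam m) C0)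
      = (\<Sum>m=1..n. min (lam m) C0) + (\<Sum>m=n+1..n+(M-n). min (lam m) C0)"
    using n sum.ub_add_nat [of 1 n "\<lambda>m. min (lam m) C0" "M - n"] by auto
  have "(\<Sum>m=1..n. min (lam m) C0) = (\<Sum>m=1..n. lam m)"
  proof (rule sum.cong)
    fix m assume "m \<in> {1..n}"
    then have "lam m \<le> lam n" using le_of_adjacent_le [OF mono] n by auto
    then show "min (lam m) C0 = lam m" using below C by simp
  qed simp
  moreover have "(\<Sum>m=n+1..n+(M-n). min (lam m) C0) = (\<Sum>m=n+1..n+(M-n). C0)"
  proof (rule sum.cong)
    fix m assume "m \<in> {n+1..n+(M-n)}"
    then have "lam (n + 1) \<le> lam m" using le_of_adjacent_le [OF mono] n by auto
    then show "min (lam m) C0 = C0" using above C by simp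
  qed simp
  moreover have "(\<Sum>m=n+1..n+(M-n). C0) = xbar - (\<Sum>i=1..n. lam i)"
    using C \<open>n < M\<close> by simp
  ultimately show "0 \<le> C0 \<and> (\<Sum>m=1..M. min (lam m) C0) = xbar"
    using split \<open>0 \<le> C0\<close> by simp
qed

lemma unique_opt_min_level:
  assumes "a > 0" "b > 0" "0 \<le> C0" and level: "(\<Sum>m=1..M. min (lam m) C0) = xbar"
    and lam_nonneg: "\<And>m. m \<in> {1..M} \<Longrightarrow> 0 \<le> lam m"
  shows "unique_opt a b M lam xbar (\<lambda>m. min (lam m) C0)"
proof -
  have objective_eq: "objective a b M d = (\<Sum>m=1..M. hcache a b (d m))" for d
    by (simp add: objective_def hcache_def)
  have "feasible M lam xbar (\<lambda>m. min (lam m) C0)"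
    using level lam_nonneg \<open>0 \<le> C0\<close> by (simp add: feasible_def)
  moreover have "objective a b M d \<le> objective a b M (\<lambda>m. min (lam m) C0) \<and>
      (objective a b M d = objective a b M (\<lambda>m. min (lam m) C0)
         \<longrightarrow> (\<forall>m\<in>{1..M}. d m = min (lam m) C0))"
    if "feasible M lam xbar d" for d
  proof -
    have "(\<Sum>m=1..M. min (lam m) C0) = (\<Sum>m=1..M. d m)"
      and "\<And>m. m \<in> {1..M} \<Longrightarrow> 0 \<le> d m \<and> d m \<le> lam m"
      using that level by (auto simp: feasible_def)
    from water_filling_unique_max [OF finite_atLeastAtMost hcache_has_real_derivative [OF assms(1,2)]
        gcache_strict_decreasing [OF assms(1,2)] \<open>0 \<le> C0\<close> this]
    show ?thesis unfolding objective_eq by blast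
  qed
  ultimately show ?thesis
    unfolding unique_opt_def by blast
qed

theorem mainTheorem6:
  fixes a b xbar :: real and M :: nat and lam :: "nat \<Rightarrow> real"
  assumes "a > 0" and "b > 0" and "M \<ge> 1"
    and "0 < lam 1" and "\<forall>m\<in>{1..<M}. lam m \<le> lam (m + 1)"
    and "0 \<le> xbar" and "xbar \<le> (\<Sum>m=1..M. lam m)"
  shows "(\<forall>c\<ge>0. exp (- (a + b * c)) \<le> gcache a b c \<and> 0 < exp (- (a + b * c)))
    \<and> (\<forall>c1 c2. 0 \<le> c1 \<longrightarrow> c1 < c2 \<longrightarrow> gcache a b c2 < gcache a b c1)
    \<and> (\<exists>C0. C0_spec M lam xbar C0)
    \<and> (\<forall>C0. C0_spec M lam xbar C0 \<longrightarrow>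
          unique_opt a b M lam xbar (\<lambda>m. min (lam m) C0))"
proof (intro conjI allI impI)
  show "exp (- (a + b * c)) \<le> gcache a b c" if "0 \<le> c" for c
    using gcache_ge_exp [OF assms(1,2) that] .
  show "0 < exp (- (a + b * c))" for c by simp
  show "gcache a b c2 < gcache a b c1" if "0 \<le> c1" "c1 < c2" for c1 c2
    using gcache_strict_decreasing [OF assms(1,2) that] .
  show "\<exists>C0. C0_spec M lam xbar C0"
    using C0_spec_exists [OF assms(3,7)] .
next
  fix C0 assume "C0_spec M lam xbar C0"
  note level = C0_spec_water_level [OF assms(3-6) this]
  have "0 \<le> lam m" if "m \<in> {1..M}" for m
    using le_of_adjacent_le [OF assms(5), of 1 m] assms(4) that by simp
  with level show "unique_opt a b M lam xbar (\<lambda>m. min (lam m) C0)"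
    by (intro unique_opt_min_level assms(1,2))
qed

end
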